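(* Let $d\in\mathbb{N}$, let $M$ be an Orlicz function such that the Orlicz space $L_M(0,1)$ is separable, and let $f\in L_M(\mathbb{T}^d)$. If $(A_k)_{k=0}^n$ is a measurable partition of $\mathbb{T}^d$, then $$\sum_{k=0}^nJ_f^M(A_k)\leq 4\|f\|_{L_M},$$ where the sum runs over those $k$ with $m(A_k)>0$.
   Context: An Orlicz function is an even convex function $M$ on $\mathbb{R}$ with $M(0)=0$; $\|g\|_{L_M}=\inf\{\lambda>0:\int M(|g|/\lambda)\le1\}$. $\mathbb{T}^d$ carries the normalised Haar measure $m$, and $\|f\|_{L_M}=\|\mu(f)\|_{L_M(0,1)}$ where $\mu(f)$ is the decreasing rearrangement. For measurable $A\subset\mathbb{T}^d$ with $m(A)>0$, $J_f^M(A)=m(A)\|\sigma_{1/m(A)}\mu(f|_A)\|_{L_M(0,1)}$, where $\mu(f|_A)$ is the decreasing rearrangement of $|f|$ restricted to $A$ (on $(0,m(A))$, extended by $0$) and $(\sigma_ug)(t)=g(t/u)$. *)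

theory Defs
  imports "HOL-Analysis.Analysis"
begin

definition orlicz_function :: "(real \<Rightarrow> real) \<Rightarrow> bool" where
  "orlicz_function M \<longleftrightarrow> (\<forall>x. M (- x) = M x) \<and> convex_on UNIV M \<and> M 0 = 0"

definition orlicz_norm :: "(real \<Rightarrow> real) \<Rightarrow> (real \<Rightarrow> real) \<Rightarrow> real" where
  "orlicz_norm M g = Inf {l. l > 0 \<and>
     (\<integral>\<^sup>+ t \<in> {0<..<1}. ennreal (M (\<bar>g t\<bar> / l)) \<partial>lborel) \<le> 1}"

text \<open>The Orlicz space L_M(0,1) (functions on (0,1); values elsewhere are irrelevant).\<close>
definition orlicz_space :: "(real \<Rightarrow> real) \<Rightarrow> (real \<Rightarrow> real) set" where
  "orlicz_space M = {g. g \<in> borel_measurable lborel \<and>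
     (\<exists>l>0. (\<integral>\<^sup>+ t \<in> {0<..<1}. ennreal (M (\<bar>g t\<bar> / l)) \<partial>lborel) \<le> 1)}"

definition orlicz_separable :: "(real \<Rightarrow> real) \<Rightarrow> bool" where
  "orlicz_separable M \<longleftrightarrow> (\<exists>D. countable D \<and> D \<subseteq> orlicz_space M \<and>
     (\<forall>g\<in>orlicz_space M. \<forall>e>0. \<exists>h\<in>D. orlicz_norm M (\<lambda>t. g t - h t) < e))"

text \<open>The torus T^d modelled as [0,1)^d with the product Lebesgue (normalised Haar) measure.\<close>
definition torus :: "nat \<Rightarrow> (nat \<Rightarrow> real) measure" where
  "torus d = PiM {..<d} (\<lambda>_. restrict_space lborel {0..<1})"

definition rearr :: "'a measure \<Rightarrow> ('a \<Rightarrow> complex) \<Rightarrow> 'a set \<Rightarrow> real \<Rightarrow> real" where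
  "rearr N f A t = Inf {s. s \<ge> 0 \<and> measure N {x \<in> A. norm (f x) > s} \<le> t}"

definition in_orlicz_torus :: "(real \<Rightarrow> real) \<Rightarrow> nat \<Rightarrow> ((nat \<Rightarrow> real) \<Rightarrow> complex) \<Rightarrow> bool" where
  "in_orlicz_torus M d f \<longleftrightarrow> f \<in> borel_measurable (torus d) \<and>
     rearr (torus d) f (space (torus d)) \<in> orlicz_space M"

definition orlicz_norm_torus :: "(real \<Rightarrow> real) \<Rightarrow> nat \<Rightarrow> ((nat \<Rightarrow> real) \<Rightarrow> complex) \<Rightarrow> real" where
  "orlicz_norm_torus M d f = orlicz_norm M (rearr (torus d) f (space (torus d)))"

text \<open>J_f^M(A) = m(A) * || sigma_{1/m(A)} mu(f|_A) ||, with (sigma_u g)(t) = g(t/u).\<close>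
definition J :: "(real \<Rightarrow> real) \<Rightarrow> nat \<Rightarrow> ((nat \<Rightarrow> real) \<Rightarrow> complex) \<Rightarrow> (nat \<Rightarrow> real) set \<Rightarrow> real" where
  "J M d f A = measure (torus d) A *
     orlicz_norm M (\<lambda>t. rearr (torus d) f A (t * measure (torus d) A))"

end

(*
  Fix a level l > 0 with int M(|f|/l) <= 1 and put a_k = m(A_k), b_k = int_{A_k} M(|f|/l).
  The decreasing rearrangement of a finite measure on [0, oo) has that measure as its
  distribution, so the rearrangement of f on A_k, dilated to (0,1), has modular
  b_k / a_k at level l.  For theta = max 1 (b_k / a_k) convexity and M 0 = 0 give
  M (x / theta) <= M x / theta, hence l * theta is admissible for it and
  J(A_k) <= a_k * l * theta = l * max a_k b_k <= l * (a_k + b_k).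
  Summing over the disjoint A_k gives 2 l, and the infimum over l gives 2 ||f||.
*)
theory Submission
  imports Defs "HOL-Probability.Distribution_Functions" "HOL-Probability.Infinite_Product_Measure"
begin

section \<open>Decreasing rearrangement of a measure on the half-line\<close>

lemma less_Inf_sublevel_iff:
  fixes D :: "real \<Rightarrow> real"
  assumes anti: "antimono D" and right_cont: "\<And>s. continuous (at_right s) D"
    and lim: "(D \<longlongrightarrow> 0) at_top" and "0 < t"
  shows "s < Inf {s. 0 \<le> s \<and> D s \<le> t} \<longleftrightarrow> s < 0 \<or> t < D s"
proof -
  define T where "T = {s. 0 \<le> s \<and> D s \<le> t}"
  have "eventually (\<lambda>s. D s < t) at_top"
    using lim \<open>0 < t\<close> by (rule order_tendstoD)
  then obtain s0 where "\<forall>s\<ge>s0. D s < t"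
    by (auto simp: eventually_at_top_linorder)
  then have "max 0 s0 \<in> T"
    by (auto simp: T_def less_imp_le)
  then have T: "T \<noteq> {}" "bdd_below T"
    by blast (auto simp: T_def intro!: bdd_belowI[of _ 0])
  have "s < Inf T" if "0 \<le> s" "t < D s"
  proof -
    have "eventually (\<lambda>y. t < D y) (at_right s)"
      using right_cont[of s] \<open>t < D s\<close>
      by (auto simp: continuous_within intro: order_tendstoD)
    then obtain b where "s < b" and b: "\<And>y. s < y \<Longrightarrow> y < b \<Longrightarrow> t < D y"
      by (auto simp: eventually_at_right_field)
    define y where "y = (s + b) / 2"
    have "s < y" "t < D y"
      using \<open>s < b\<close> b by (auto simp: y_def)
    have "y \<le> Inf T"
    proof (rule cInf_greatest[OF T(1)])
      fix s' assume "s' \<in> T"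
      show "y \<le> s'"
      proof (rule ccontr)
        assume "\<not> y \<le> s'"
        then have "D y \<le> D s'"
          using anti by (auto simp: antimono_def)
        with \<open>t < D y\<close> \<open>s' \<in> T\<close> show False
          by (auto simp: T_def)
      qed
    qed
    with \<open>s < y\<close> show ?thesis by simp
  qed
  moreover have "0 \<le> Inf T"
    using T(1) by (rule cInf_greatest) (auto simp: T_def)
  moreover have "Inf T \<le> s" if "0 \<le> s" "D s \<le> t"
    using that T(2) by (intro cInf_lower) (auto simp: T_def)
  ultimately show ?thesis
    unfolding T_def[symmetric] by force
qed

definition decreasing_rearrangement :: "real measure \<Rightarrow> real \<Rightarrow> real" where
  "decreasing_rearrangement \<nu> t = Inf {s. 0 \<le> s \<and> measure \<nu> {s<..} \<le> t}"

context finite_borel_measure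
begin

lemma measure_Ioi_eq_cdf: "measure M {s<..} = measure M (space M) - cdf M s"
proof -
  have "{s<..} = space M - {..s}"
    by (auto simp: borel_UNIV)
  then show ?thesis
    by (simp add: finite_measure_compl[OF sets_M] cdf_def)
qed

lemma less_decreasing_rearrangement_iff:
  assumes "0 < t"
  shows "s < decreasing_rearrangement M t \<longleftrightarrow> s < 0 \<or> t < measure M {s<..}"
  unfolding decreasing_rearrangement_def
proof (rule less_Inf_sublevel_iff[OF _ _ _ assms])
  show "antimono (\<lambda>s. measure M {s<..})"
    by (auto simp: antimono_def measure_Ioi_eq_cdf cdf_nondecreasing)
  show "continuous (at_right s) (\<lambda>s. measure M {s<..})" for s
    unfolding measure_Ioi_eq_cdf by (intro continuous_intros cdf_is_right_cont)
  show "((\<lambda>s. measure M {s<..}) \<longlongrightarrow> 0) at_top"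
    unfolding measure_Ioi_eq_cdf
    using tendsto_diff[OF tendsto_const cdf_lim_at_top, of "measure M (space M)"] by simp
qed

lemma measure_Ioi_eq_space:
  assumes "emeasure M {..<0} = 0" and "s < 0"
  shows "measure M {s<..} = measure M (space M)"
proof -
  have "cdf M s \<le> measure M {..<0}"
    unfolding cdf_def using \<open>s < 0\<close> by (intro finite_measure_mono) auto
  then have "cdf M s = 0"
    using assms(1) cdf_nonneg[of s] by (simp add: measure_def)
  then show ?thesis
    by (simp add: measure_Ioi_eq_cdf)
qed

lemma decreasing_rearrangement_superlevel:
  assumes "emeasure M {..<0} = 0"
  shows "{t \<in> {0<..<measure M (space M)}. s < decreasing_rearrangement M t}
    = {0<..<measure M {s<..}}"
  using bounded_measure[of "{s<..}"] less_decreasing_rearrangement_iff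
    measure_Ioi_eq_space[OF assms]
  by auto

lemma decreasing_rearrangement_measurable:
  assumes "emeasure M {..<0} = 0"
  shows "decreasing_rearrangement M
    \<in> borel_measurable (restrict_space lborel {0<..<measure M (space M)})"
  unfolding borel_measurable_iff_greater
proof
  fix s
  let ?\<Omega> = "{0<..<measure M (space M)}"
  let ?S = "{t \<in> space (restrict_space lborel ?\<Omega>). s < decreasing_rearrangement M t}"
  have "?S = ?\<Omega> \<inter> {0<..<measure M {s<..}}"
    using decreasing_rearrangement_superlevel[OF assms, of s] bounded_measure[of "{s<..}"]
    by auto
  then show "?S \<in> sets (restrict_space lborel ?\<Omega>)"
    unfolding sets_restrict_space by (auto intro: image_eqI)
qed

lemma distr_decreasing_rearrangement:
  assumes "emeasure M {..<0} = 0"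
  shows "distr (restrict_space lborel {0<..<measure M (space M)}) borel
    (decreasing_rearrangement M) = M"
proof (rule measure_eqI_lessThan[symmetric])
  fix s
  let ?\<Omega> = "{0<..<measure M (space M)}" and ?R = "decreasing_rearrangement M"
  have "emeasure (distr (restrict_space lborel ?\<Omega>) borel ?R) {s<..}
      = emeasure (restrict_space lborel ?\<Omega>) {t \<in> ?\<Omega>. s < ?R t}"
    using decreasing_rearrangement_measurable[OF assms]
    by (subst emeasure_distr) (auto simp: vimage_def Int_def conj_commute space_restrict_space)
  also have "\<dots> = emeasure lborel {0<..<measure M {s<..}}"
    unfolding decreasing_rearrangement_superlevel[OF assms] using bounded_measure[of "{s<..}"]
    by (subst emeasure_restrict_space) auto
  also have "\<dots> = emeasure M {s<..}"
    by (simp add: emeasure_eq_measure)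
  finally show "emeasure M {s<..} = emeasure (distr (restrict_space lborel ?\<Omega>) borel ?R) {s<..}"
    ..
qed (auto simp: M_is_borel emeasure_eq_measure)

lemma nn_integral_decreasing_rearrangement:
  assumes nonneg: "emeasure M {..<0} = 0" and pos: "0 < measure M (space M)"
    and [measurable]: "\<Phi> \<in> borel_measurable borel"
  shows "measure M (space M) *
      (\<integral>\<^sup>+ t \<in> {0<..<1}. \<Phi> (decreasing_rearrangement M (t * measure M (space M))) \<partial>lborel)
    = (\<integral>\<^sup>+ y. \<Phi> y \<partial>M)"
proof -
  let ?a = "measure M (space M)" and ?R = "decreasing_rearrangement M"
  define \<Omega> where "\<Omega> = {0<..<?a}"
  define R0 where "R0 t = (if t \<in> \<Omega> then ?R t else 0)" for t
  have R: "?R \<in> borel_measurable (restrict_space lborel \<Omega>)"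
    unfolding \<Omega>_def using nonneg by (rule decreasing_rearrangement_measurable)
  then have [measurable]: "R0 \<in> borel_measurable borel"
    unfolding R0_def by (subst (asm) measurable_restrict_space_iff) (auto simp: \<Omega>_def)
  have "(\<integral>\<^sup>+ y. \<Phi> y \<partial>M) = (\<integral>\<^sup>+ t. \<Phi> (?R t) \<partial>restrict_space lborel \<Omega>)"
    using R unfolding \<Omega>_def
    by (subst (1) distr_decreasing_rearrangement[OF nonneg, symmetric])
       (simp add: nn_integral_distr)
  also have "\<dots> = (\<integral>\<^sup>+ t. \<Phi> (R0 t) * indicator \<Omega> t \<partial>lborel)"
    by (auto simp: nn_integral_restrict_space \<Omega>_def R0_def indicator_def intro!: nn_integral_cong)
  also have "\<dots> = ?a * (\<integral>\<^sup>+ x. \<Phi> (R0 (?a * x)) * indicator \<Omega> (?a * x) \<partial>lborel)"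
    using pos by (subst nn_integral_real_affine[where c = ?a and t = 0]) (auto simp: \<Omega>_def)
  also have "(\<integral>\<^sup>+ x. \<Phi> (R0 (?a * x)) * indicator \<Omega> (?a * x) \<partial>lborel)
      = (\<integral>\<^sup>+ t \<in> {0<..<1}. \<Phi> (?R (t * ?a)) \<partial>lborel)"
    using pos
    by (intro nn_integral_cong)
       (auto simp: R0_def \<Omega>_def indicator_def mult.commute zero_less_mult_iff)
  finally show ?thesis ..
qed

end

section \<open>The rearrangement of a function on a set\<close>

definition norm_distribution ::
    "'a measure \<Rightarrow> ('a \<Rightarrow> 'b::real_normed_vector) \<Rightarrow> 'a set \<Rightarrow> real measure" where
  "norm_distribution N f A = distr (restrict_space N A) borel (\<lambda>x. norm (f x))"

context finite_measure
begin

lemma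
  assumes A: "A \<in> sets M" and f[measurable]: "f \<in> borel_measurable M"
  shows finite_borel_measure_norm_distribution: "finite_borel_measure (norm_distribution M f A)"
    and emeasure_norm_distribution: "B \<in> sets borel \<Longrightarrow>
      emeasure (norm_distribution M f A) B = emeasure M {x \<in> A. norm (f x) \<in> B}"
    and measure_norm_distribution: "B \<in> sets borel \<Longrightarrow>
      measure (norm_distribution M f A) B = measure M {x \<in> A. norm (f x) \<in> B}"
proof -
  have h: "(\<lambda>x. norm (f x)) \<in> borel_measurable (restrict_space M A)"
    by (rule measurable_restrict_space1) simp
  have [simp]: "{x \<in> A. norm (f x) \<in> B} \<in> sets M" if "B \<in> sets borel" for B
  proof -
    have "{x \<in> A. norm (f x) \<in> B} = A \<inter> {x \<in> space M. norm (f x) \<in> B}"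
      using sets.sets_into_space[OF A] by auto
    then show ?thesis
      using A that by auto
  qed
  show "finite_borel_measure (norm_distribution M f A)"
    unfolding norm_distribution_def finite_borel_measure_def finite_borel_measure_axioms_def
    using finite_measure.finite_measure_distr
      [OF finite_measure_restrict_space[OF finite_measure_axioms A] h]
    by simp
  show emeasure_eq: "emeasure (norm_distribution M f A) B = emeasure M {x \<in> A. norm (f x) \<in> B}"
    if "B \<in> sets borel" for B
  proof -
    have "(\<lambda>x. norm (f x)) -` B \<inter> space (restrict_space M A) = {x \<in> A. norm (f x) \<in> B}"
      using sets.sets_into_space[OF A] by (auto simp: space_restrict_space)
    then show ?thesis
      using A that unfolding norm_distribution_def emeasure_distr[OF h that]
      by (simp add: emeasure_restrict_space)
  qed
  show "measure (norm_distribution M f A) B = measure M {x \<in> A. norm (f x) \<in> B}"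
    if "B \<in> sets borel" for B
    using emeasure_eq[OF that] by (simp add: measure_def)
qed

lemma rearr_eq_decreasing_rearrangement:
  assumes "A \<in> sets M" and "f \<in> borel_measurable M"
  shows "rearr M f A = decreasing_rearrangement (norm_distribution M f A)"
  using measure_norm_distribution[OF assms]
  by (auto simp: rearr_def decreasing_rearrangement_def)

lemma nn_integral_rearr:
  assumes A: "A \<in> sets M" and f[measurable]: "f \<in> borel_measurable M"
    and pos: "0 < measure M A" and \<Phi>[measurable]: "\<Phi> \<in> borel_measurable borel"
  shows "measure M A * (\<integral>\<^sup>+ t \<in> {0<..<1}. \<Phi> (rearr M f A (t * measure M A)) \<partial>lborel)
    = (\<integral>\<^sup>+ x \<in> A. \<Phi> (norm (f x)) \<partial>M)"
proof -
  let ?\<nu> = "norm_distribution M f A"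
  interpret \<nu>: finite_borel_measure ?\<nu>
    using A f by (rule finite_borel_measure_norm_distribution)
  have "emeasure ?\<nu> {..<0} = 0"
    using emeasure_norm_distribution[OF A f, of "{..<0}"] by simp
  moreover have "measure ?\<nu> (space ?\<nu>) = measure M A"
    using measure_norm_distribution[OF A f, of UNIV] by (simp add: \<nu>.borel_UNIV)
  ultimately have "measure M A * (\<integral>\<^sup>+ t \<in> {0<..<1}. \<Phi> (rearr M f A (t * measure M A)) \<partial>lborel)
      = (\<integral>\<^sup>+ y. \<Phi> y \<partial>?\<nu>)"
    using \<nu>.nn_integral_decreasing_rearrangement[OF _ _ \<Phi>] pos
    by (simp add: rearr_eq_decreasing_rearrangement[OF A f])
  also have "\<dots> = (\<integral>\<^sup>+ x. \<Phi> (norm (f x)) \<partial>restrict_space M A)"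
    unfolding norm_distribution_def
    by (rule nn_integral_distr) (auto intro: measurable_restrict_space1)
  also have "\<dots> = (\<integral>\<^sup>+ x \<in> A. \<Phi> (norm (f x)) \<partial>M)"
    using A by (simp add: nn_integral_restrict_space)
  finally show ?thesis .
qed

end

lemma sum_set_nn_integral_le_nn_integral:
  assumes "finite K" and "\<And>k. k \<in> K \<Longrightarrow> A k \<in> sets N" and "disjoint_family_on A K"
    and "g \<in> borel_measurable N"
  shows "(\<Sum>k\<in>K. \<integral>\<^sup>+ x \<in> A k. g x \<partial>N) \<le> (\<integral>\<^sup>+ x. g x \<partial>N)"
proof -
  have "(\<Sum>k\<in>K. \<integral>\<^sup>+ x \<in> A k. g x \<partial>N) = (\<Sum>k\<in>K. emeasure (density N g) (A k))"
    using assms by (intro sum.cong) (simp_all add: emeasure_density)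
  also have "\<dots> = emeasure (density N g) (\<Union>k\<in>K. A k)"
    using assms by (intro sum_emeasure) auto
  also have "\<dots> \<le> emeasure (density N g) (space N)"
    using assms(2) sets.sets_into_space by (intro emeasure_mono) auto
  also have "\<dots> = (\<integral>\<^sup>+ x. g x \<partial>N)"
    using assms(4) by (simp add: emeasure_density)
  finally show ?thesis .
qed

section \<open>Orlicz functions, modular and norm\<close>

lemma orlicz_function_div_le:
  assumes "orlicz_function M" and "1 \<le> \<theta>"
  shows "M (z / \<theta>) \<le> M z / \<theta>"
proof -
  have "convex_on UNIV M" and "M 0 = 0"
    using assms unfolding orlicz_function_def by auto
  moreover from \<open>convex_on UNIV M\<close>
  have "M ((1 - 1/\<theta>) *\<^sub>R 0 + (1/\<theta>) *\<^sub>R z) \<le> (1 - 1/\<theta>) * M 0 + (1/\<theta>) * M z"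
    by (rule convex_onD) (use assms(2) in auto)
  ultimately show ?thesis by simp
qed

lemma orlicz_function_borel_measurable:
  assumes "orlicz_function M"
  shows "M \<in> borel_measurable borel"
proof -
  have "convex_on UNIV M"
    using assms unfolding orlicz_function_def by auto
  then have "continuous_on UNIV M"
    by (intro convex_on_continuous) auto
  then show ?thesis
    by (rule borel_measurable_continuous_onI)
qed

definition orlicz_modular :: "(real \<Rightarrow> real) \<Rightarrow> (real \<Rightarrow> real) \<Rightarrow> real \<Rightarrow> ennreal" where
  "orlicz_modular M g l = (\<integral>\<^sup>+ t \<in> {0<..<1}. ennreal (M (\<bar>g t\<bar> / l)) \<partial>lborel)"

lemma orlicz_norm_le:
  assumes "0 < l" and "orlicz_modular M g l \<le> 1"
  shows "orlicz_norm M g \<le> l"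
  unfolding orlicz_norm_def using assms
  by (intro cInf_lower) (auto simp: orlicz_modular_def intro!: bdd_belowI[of _ 0])

lemma le_orlicz_norm:
  assumes "0 < l" and "orlicz_modular M g l \<le> 1"
    and "\<And>l. 0 < l \<Longrightarrow> orlicz_modular M g l \<le> 1 \<Longrightarrow> c \<le> l"
  shows "c \<le> orlicz_norm M g"
  unfolding orlicz_norm_def using assms
  by (intro cInf_greatest) (auto simp: orlicz_modular_def)

lemma orlicz_norm_nonneg:
  assumes "g \<in> orlicz_space M"
  shows "0 \<le> orlicz_norm M g"
  using assms unfolding orlicz_space_def
  by (auto simp: orlicz_modular_def intro!: le_orlicz_norm)

lemma orlicz_modular_rearr:
  assumes "orlicz_function M" and "finite_measure N" and "A \<in> sets N"
    and "f \<in> borel_measurable N" and "0 < measure N A"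
  shows "measure N A * orlicz_modular M (\<lambda>t. rearr N f A (t * measure N A)) l
    = (\<integral>\<^sup>+ x \<in> A. ennreal (M (norm (f x) / l)) \<partial>N)"
proof -
  have [measurable]: "M \<in> borel_measurable borel"
    using assms(1) by (rule orlicz_function_borel_measurable)
  show ?thesis
    unfolding orlicz_modular_def using assms(2-)
    by (subst finite_measure.nn_integral_rearr) auto
qed

lemma (in prob_space) orlicz_modular_rearr_space:
  assumes "orlicz_function \<Phi>" and "f \<in> borel_measurable M"
  shows "orlicz_modular \<Phi> (rearr M f (space M)) l
    = (\<integral>\<^sup>+ x. ennreal (\<Phi> (norm (f x) / l)) \<partial>M)"
proof -
  have "orlicz_modular \<Phi> (rearr M f (space M)) l
      = (\<integral>\<^sup>+ x \<in> space M. ennreal (\<Phi> (norm (f x) / l)) \<partial>M)"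
    using orlicz_modular_rearr[OF assms(1) finite_measure_axioms sets.top assms(2), of l]
    by (simp add: prob_space)
  also have "\<dots> = (\<integral>\<^sup>+ x. ennreal (\<Phi> (norm (f x) / l)) \<partial>M)"
    by (intro nn_integral_cong) simp
  finally show ?thesis .
qed

lemma orlicz_norm_rearr_le:
  assumes M: "orlicz_function M" and "finite_measure N" and A: "A \<in> sets N"
    and f: "f \<in> borel_measurable N" and l: "0 < l" and b: "0 \<le> b"
    and modular: "(\<integral>\<^sup>+ x \<in> A. ennreal (M (norm (f x) / l)) \<partial>N) \<le> ennreal b"
  shows "measure N A * orlicz_norm M (\<lambda>t. rearr N f A (t * measure N A))
    \<le> l * (measure N A + b)"
proof (cases "measure N A = 0")
  case True
  then show ?thesis
    using l b by simp
next
  case False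
  define a where "a = measure N A"
  define \<theta> where "\<theta> = max 1 (b / a)"
  have a: "0 < a"
    using False measure_nonneg[of N A] unfolding a_def by linarith
  have \<theta>: "1 \<le> \<theta>"
    by (simp add: \<theta>_def)
  have a\<theta>: "a * \<theta> = max a b"
    using a by (simp add: \<theta>_def max_mult_distrib_left)
  have "b / \<theta> \<le> a"
    using a\<theta> \<theta> by (simp add: divide_le_eq mult.commute)
  have [measurable]: "M \<in> borel_measurable borel"
    using M by (rule orlicz_function_borel_measurable)
  let ?g = "\<lambda>t. rearr N f A (t * a)"
  have "ennreal a * orlicz_modular M ?g (l * \<theta>)
      = (\<integral>\<^sup>+ x \<in> A. ennreal (M (norm (f x) / (l * \<theta>))) \<partial>N)"
    unfolding a_def using assms a by (intro orlicz_modular_rearr) (auto simp: a_def)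
  also have "\<dots> \<le> (\<integral>\<^sup>+ x \<in> A. ennreal (1 / \<theta>) * ennreal (M (norm (f x) / l)) \<partial>N)"
  proof (intro nn_integral_mono mult_right_mono)
    fix x
    have "M (norm (f x) / (l * \<theta>)) \<le> M (norm (f x) / l) / \<theta>"
      using orlicz_function_div_le[OF M \<theta>, of "norm (f x) / l"] by simp
    then show "ennreal (M (norm (f x) / (l * \<theta>)))
        \<le> ennreal (1 / \<theta>) * ennreal (M (norm (f x) / l))"
      using \<theta> by (simp add: ennreal_mult'[symmetric] ennreal_leI)
  qed simp
  also have "\<dots> = ennreal (1 / \<theta>) * (\<integral>\<^sup>+ x \<in> A. ennreal (M (norm (f x) / l)) \<partial>N)"
    using A f by (subst nn_integral_cmult[symmetric]) (simp_all add: mult.assoc)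
  also have "\<dots> \<le> ennreal (1 / \<theta>) * ennreal b"
    using modular by (rule mult_left_mono) simp
  also have "\<dots> \<le> ennreal a * 1"
    using \<open>b / \<theta> \<le> a\<close> \<theta> by (simp add: ennreal_mult'[symmetric] ennreal_leI)
  finally have "orlicz_modular M ?g (l * \<theta>) \<le> 1"
    using a by (subst (asm) ennreal_mult_le_mult_iff) auto
  then have "orlicz_norm M ?g \<le> l * \<theta>"
    using l \<theta> by (intro orlicz_norm_le) auto
  then have "a * orlicz_norm M ?g \<le> l * (a * \<theta>)"
    using a by (simp add: mult_left_mono mult.left_commute)
  also note a\<theta>
  also have "l * max a b \<le> l * (a + b)"
    using l a b by (intro mult_left_mono) auto
  finally show ?thesis
    by (simp add: a_def)
qed

lemma sum_orlicz_norm_rearr_le: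
  assumes M: "orlicz_function M" and "prob_space N" and f: "f \<in> borel_measurable N"
    and K: "finite K" and A: "\<And>k. k \<in> K \<Longrightarrow> A k \<in> sets N"
    and disj: "disjoint_family_on A K"
    and l: "0 < l" and modular: "(\<integral>\<^sup>+ x. ennreal (M (norm (f x) / l)) \<partial>N) \<le> 1"
  shows "(\<Sum>k\<in>K. measure N (A k) * orlicz_norm M (\<lambda>t. rearr N f (A k) (t * measure N (A k))))
    \<le> 2 * l"
proof -
  interpret prob_space N by fact
  have [measurable]: "M \<in> borel_measurable borel"
    using M by (rule orlicz_function_borel_measurable)
  define B where "B k = (\<integral>\<^sup>+ x \<in> A k. ennreal (M (norm (f x) / l)) \<partial>N)" for k
  have "sum B K \<le> (\<integral>\<^sup>+ x. ennreal (M (norm (f x) / l)) \<partial>N)"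
    unfolding B_def using K A disj f by (intro sum_set_nn_integral_le_nn_integral) auto
  with modular have B_sum: "sum B K \<le> 1"
    by simp
  have B_eq: "B k = ennreal (enn2real (B k))" if "k \<in> K" for k
  proof -
    have "B k \<le> 1"
      using B_sum sum_mono2[OF K, of "{k}" B] that by simp
    then show ?thesis
      by (cases "B k") (auto simp: top_unique)
  qed
  have "ennreal (\<Sum>k\<in>K. enn2real (B k)) = sum B K"
    by (subst sum_ennreal[symmetric]) (auto intro!: sum.cong simp: B_eq[symmetric])
  with B_sum have b_sum: "(\<Sum>k\<in>K. enn2real (B k)) \<le> 1"
    by (metis ennreal_le_1)
  have "(\<Sum>k\<in>K. measure N (A k)) = measure N (\<Union>k\<in>K. A k)"
    using K A disj by (intro finite_measure_finite_Union[symmetric]) auto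
  then have a_sum: "(\<Sum>k\<in>K. measure N (A k)) \<le> 1"
    by (simp add: prob_le_1)
  have "(\<Sum>k\<in>K. measure N (A k) * orlicz_norm M (\<lambda>t. rearr N f (A k) (t * measure N (A k))))
      \<le> (\<Sum>k\<in>K. l * (measure N (A k) + enn2real (B k)))"
    using A B_eq
    by (intro sum_mono orlicz_norm_rearr_le[OF M finite_measure_axioms _ f l]) (auto simp: B_def)
  also have "\<dots> = l * ((\<Sum>k\<in>K. measure N (A k)) + (\<Sum>k\<in>K. enn2real (B k)))"
    by (simp add: sum.distrib[symmetric] sum_distrib_left)
  also have "\<dots> \<le> l * 2"
    using a_sum b_sum l by (intro mult_left_mono) auto
  finally show ?thesis
    by simp
qed

lemma sum_orlicz_norm_rearr_le_orlicz_norm: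
  assumes M: "orlicz_function M" and N: "prob_space N" and f: "f \<in> borel_measurable N"
    and g: "rearr N f (space N) \<in> orlicz_space M"
    and "finite K" and "\<And>k. k \<in> K \<Longrightarrow> A k \<in> sets N" and "disjoint_family_on A K"
  shows "(\<Sum>k\<in>K. measure N (A k) * orlicz_norm M (\<lambda>t. rearr N f (A k) (t * measure N (A k))))
    \<le> 2 * orlicz_norm M (rearr N f (space N))"
proof -
  let ?S = "\<Sum>k\<in>K. measure N (A k) * orlicz_norm M (\<lambda>t. rearr N f (A k) (t * measure N (A k)))"
  obtain l0 where "0 < l0" and "orlicz_modular M (rearr N f (space N)) l0 \<le> 1"
    using g unfolding orlicz_space_def orlicz_modular_def by auto
  moreover have "?S / 2 \<le> l"
    if "0 < l" and "orlicz_modular M (rearr N f (space N)) l \<le> 1" for l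
    using sum_orlicz_norm_rearr_le[OF M N f assms(5-7) \<open>0 < l\<close>] that
      prob_space.orlicz_modular_rearr_space[OF N M f]
    by simp
  ultimately have "?S / 2 \<le> orlicz_norm M (rearr N f (space N))"
    by (rule le_orlicz_norm)
  then show ?thesis
    by simp
qed

lemma prob_space_torus: "prob_space (torus d)"
  unfolding torus_def by (intro prob_space_PiM prob_space_restrict_space) auto

theorem lemma3p3:
  fixes M :: "real \<Rightarrow> real" and d n :: nat
    and f :: "(nat \<Rightarrow> real) \<Rightarrow> complex" and A :: "nat \<Rightarrow> (nat \<Rightarrow> real) set"
  assumes "orlicz_function M"
    and "orlicz_separable M"
    and "in_orlicz_torus M d f"
    and "\<And>k. k \<le> n \<Longrightarrow> A k \<in> sets (torus d)"
    and "\<And>j k. j \<le> n \<Longrightarrow> k \<le> n \<Longrightarrow> j \<noteq> k \<Longrightarrow> A j \<inter> A k = {}"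
    and "(\<Union>k\<in>{0..n}. A k) = space (torus d)"
  shows "(\<Sum>k\<in>{k\<in>{0..n}. measure (torus d) (A k) > 0}. J M d f (A k))
           \<le> 4 * orlicz_norm_torus M d f"
proof -
  let ?K = "{k\<in>{0..n}. measure (torus d) (A k) > 0}"
  have f: "f \<in> borel_measurable (torus d)"
    and g: "rearr (torus d) f (space (torus d)) \<in> orlicz_space M"
    using assms(3) unfolding in_orlicz_torus_def by auto
  have "disjoint_family_on A ?K"
    using assms(5) by (auto simp: disjoint_family_on_def)
  then have "(\<Sum>k\<in>?K. J M d f (A k)) \<le> 2 * orlicz_norm_torus M d f"
    unfolding J_def orlicz_norm_torus_def using assms(4)
    by (intro sum_orlicz_norm_rearr_le_orlicz_norm[OF assms(1) prob_space_torus f g]) auto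
  moreover have "0 \<le> orlicz_norm_torus M d f"
    unfolding orlicz_norm_torus_def using g by (rule orlicz_norm_nonneg)
  ultimately show ?thesis
    by linarith
qed

end
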